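(* Let $R:\mathcal Y\to\mathbb R$ be differentiable and $1$-strongly convex, with $w\mapsto D_R(z\|w)$ $G$-Lipschitz on $\mathcal Y$ for every $z\in\mathcal Y$. Let $K\subseteq\mathcal Y$ be closed and convex, $\eta>0$, $z_1\in K$, and let $\tilde g_1,\tilde g_2,\dots\in\mathbb R^d$ be arbitrary. Suppose $z_t\in\mathcal Y$ for all $t$ and $$z_{t+1}=r_{t+1}+y_{t+1},\qquad y_{t+1}=\arg\min_{y\in K}\Big\{\tilde g_t^\top(y-z_t)+\tfrac1\eta D_R(y\|z_t)\Big\}.$$ Then for every $u\in K$, $$\sum_{t=1}^T\langle\tilde g_t,z_t-u\rangle\le\frac{D_R(u\|z_1)}\eta+\frac\eta2\sum_{t=1}^T\|\tilde g_t\|_2^2+\frac G\eta\sum_{t=1}^T\|r_{t+1}\|_2.$$ Consequently, if $\|\tilde g_t\|\le\tilde G_F$, $\|r_{t+1}\|\le\hat C_\eta$ for all $t$ and $\sup_{z,z'\in\mathcal Y}D_R(z\|z')\le D_1$, then (also in expectation, for random $\tilde g_t,r_{t+1}$) $$\sum_{t=1}^T\langle\tilde g_t,z_t-u\rangle\le\frac{D_1}\eta+\frac{\eta\tilde G_F^2T}2+\frac{\hat C_\eta GT}\eta.$$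
   Context: $\mathcal Y\subset\mathbb R^d$ convex compact; $D_R(x\|y)=R(x)-R(y)-\nabla R(y)^\top(x-y)$. *)

theory Defs
  imports "HOL-Analysis.Analysis"
begin

definition strongly_convex_on :: "real \<Rightarrow> 'a::real_normed_vector set \<Rightarrow> ('a \<Rightarrow> real) \<Rightarrow> bool" where
  "strongly_convex_on mu S R \<longleftrightarrow>
     (\<forall>x\<in>S. \<forall>y\<in>S. \<forall>\<theta>::real. 0 \<le> \<theta> \<and> \<theta> \<le> 1 \<longrightarrow>
        R (\<theta> *\<^sub>R x + (1 - \<theta>) *\<^sub>R y)
          \<le> \<theta> * R x + (1 - \<theta>) * R y - mu / 2 * \<theta> * (1 - \<theta>) * (norm (x - y))\<^sup>2)"

definition bregman :: "('a::real_normed_vector \<Rightarrow> real) \<Rightarrow> 'a set \<Rightarrow> 'a \<Rightarrow> 'a \<Rightarrow> real" where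
  "bregman R Y x y = R x - R y - frechet_derivative R (at y within Y) (x - y)"

end

theory Submission
  imports Defs
begin

(* The first-order optimality condition of the proximal step y' = y (t + 1), rewritten with
   the three-point identity of Bregman divergences, gives
     eta <g, y' - u> <= D(u, z) - D(u, y') - D(y', z).
   Strong convexity (D(y', z) >= |y' - z|^2 / 2) and Young's inequality absorb <g, z - y'>
   at cost eta^2 |g|^2 / 2, and the G-Lipschitz continuity of D(u, -) replaces y' by the
   perturbed iterate z (t + 1) = r (t + 1) + y' at cost G |r (t + 1)|.  The terms D(u, z t)
   then telescope. *)

lemma has_derivative_segment_quotient:
  fixes F :: "'a::real_normed_vector \<Rightarrow> real"
  assumes F: "(F has_derivative F') (at y within S)" and S: "convex S" "y \<in> S" "v \<in> S"
  shows "((\<lambda>\<theta>. (F (y + \<theta> *\<^sub>R (v - y)) - F y) / \<theta>) \<longlongrightarrow> F' (v - y)) (at 0 within {0..1})"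
proof -
  let ?p = "\<lambda>\<theta>::real. y + \<theta> *\<^sub>R (v - y)"
  have "?p ` {0..1} \<subseteq> S"
    using convexD_alt[OF S] by (auto simp: algebra_simps)
  then have "(F has_derivative F') (at (?p 0) within ?p ` {0..1})"
    using has_derivative_subset[OF F] by simp
  moreover have "(?p has_derivative (\<lambda>\<theta>. \<theta> *\<^sub>R (v - y))) (at 0 within {0..1})"
    by (auto intro!: derivative_eq_intros)
  ultimately have "((\<lambda>\<theta>. F (?p \<theta>)) has_derivative (\<lambda>\<theta>. F' (\<theta> *\<^sub>R (v - y)))) (at 0 within {0..1})"
    using has_derivative_in_compose by blast
  moreover have "(\<lambda>\<theta>. F' (\<theta> *\<^sub>R (v - y))) = (*) (F' (v - y))"
    using linear_scale[OF has_derivative_linear[OF F]] by (auto simp: fun_eq_iff)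
  ultimately have "((\<lambda>\<theta>. F (?p \<theta>)) has_field_derivative F' (v - y)) (at 0 within {0..1})"
    by (simp add: has_field_derivative_def)
  then show ?thesis
    unfolding has_field_derivative_iff by simp
qed

lemma at_0_within_unit_interval:
  "\<not> trivial_limit (at (0::real) within {0..1})"
  "eventually (\<lambda>\<theta>. 0 < \<theta> \<and> \<theta> \<le> 1) (at (0::real) within {0..1})"
  by (auto simp: trivial_limit_within eventually_at_filter)

lemma has_derivative_min_on_convex_nonneg:
  fixes F :: "'a::real_normed_vector \<Rightarrow> real"
  assumes F: "(F has_derivative F') (at y within S)" and S: "convex S" "y \<in> S" "v \<in> S"
    and min: "\<forall>w\<in>S. F y \<le> F w"
  shows "0 \<le> F' (v - y)"
proof (rule tendsto_lowerbound[OF has_derivative_segment_quotient[OF assms(1-4)]])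
  show "eventually (\<lambda>\<theta>. 0 \<le> (F (y + \<theta> *\<^sub>R (v - y)) - F y) / \<theta>) (at 0 within {0..1})"
    using at_0_within_unit_interval(2)
  proof (rule eventually_mono)
    fix \<theta> :: real assume "0 < \<theta> \<and> \<theta> \<le> 1"
    moreover from this have "y + \<theta> *\<^sub>R (v - y) \<in> S"
      using convexD_alt[OF S, of \<theta>] by (simp add: algebra_simps)
    ultimately show "0 \<le> (F (y + \<theta> *\<^sub>R (v - y)) - F y) / \<theta>"
      using min by simp
  qed
qed (rule at_0_within_unit_interval(1))

lemma strongly_convex_on_has_derivative_le:
  fixes F :: "'a::real_normed_vector \<Rightarrow> real"
  assumes sc: "strongly_convex_on \<mu> S F" and S: "convex S" "x \<in> S" "v \<in> S"
    and F: "(F has_derivative F') (at x within S)"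
  shows "F' (v - x) \<le> F v - F x - \<mu> / 2 * (norm (v - x))\<^sup>2"
proof -
  have "((\<lambda>\<theta>::real. F v - F x - \<mu> / 2 * (1 - \<theta>) * (norm (v - x))\<^sup>2)
          \<longlongrightarrow> F v - F x - \<mu> / 2 * (1 - 0) * (norm (v - x))\<^sup>2) (at 0 within {0..1})"
    by (intro tendsto_intros)
  moreover have "eventually (\<lambda>\<theta>. (F (x + \<theta> *\<^sub>R (v - x)) - F x) / \<theta>
                   \<le> F v - F x - \<mu> / 2 * (1 - \<theta>) * (norm (v - x))\<^sup>2) (at 0 within {0..1})"
    using at_0_within_unit_interval(2)
  proof (rule eventually_mono)
    fix \<theta> :: real assume \<theta>: "0 < \<theta> \<and> \<theta> \<le> 1"
    have "F (\<theta> *\<^sub>R v + (1 - \<theta>) *\<^sub>R x)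
            \<le> \<theta> * F v + (1 - \<theta>) * F x - \<mu> / 2 * \<theta> * (1 - \<theta>) * (norm (v - x))\<^sup>2"
      using sc S \<theta> unfolding strongly_convex_on_def by auto
    moreover have "\<theta> *\<^sub>R v + (1 - \<theta>) *\<^sub>R x = x + \<theta> *\<^sub>R (v - x)"
      by (simp add: algebra_simps)
    ultimately have "F (x + \<theta> *\<^sub>R (v - x)) - F x
                       \<le> \<theta> * (F v - F x - \<mu> / 2 * (1 - \<theta>) * (norm (v - x))\<^sup>2)"
      by (simp add: algebra_simps)
    then show "(F (x + \<theta> *\<^sub>R (v - x)) - F x) / \<theta> \<le> F v - F x - \<mu> / 2 * (1 - \<theta>) * (norm (v - x))\<^sup>2"
      using \<theta> by (simp add: divide_le_eq mult.commute)
  qed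
  ultimately show ?thesis
    using tendsto_le[OF at_0_within_unit_interval(1) _ has_derivative_segment_quotient[OF F S]]
    by simp
qed

lemma bregman_ge_strongly_convex:
  assumes sc: "strongly_convex_on \<mu> Y R" and Y: "convex Y" "x \<in> Y" "y \<in> Y"
    and R: "R differentiable (at y within Y)"
  shows "\<mu> / 2 * (norm (x - y))\<^sup>2 \<le> bregman R Y x y"
  using strongly_convex_on_has_derivative_le[OF sc Y(1,3,2) R[unfolded frechet_derivative_works]]
  unfolding bregman_def by linarith

lemma bregman_three_point:
  assumes "R differentiable (at z within Y)"
  shows "bregman R Y u z - bregman R Y u y - bregman R Y y z
           = frechet_derivative R (at y within Y) (u - y) - frechet_derivative R (at z within Y) (u - y)"
proof -
  have "linear (frechet_derivative R (at z within Y))"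
    using assms frechet_derivative_works has_derivative_linear by blast
  then have "frechet_derivative R (at z within Y) (u - z)
               = frechet_derivative R (at z within Y) (u - y) + frechet_derivative R (at z within Y) (y - z)"
    using linear_add[of _ "u - y" "y - z"] by simp
  then show ?thesis
    by (simp add: bregman_def)
qed

lemma bregman_prox_step_optimality:
  fixes R :: "'a::real_inner \<Rightarrow> real"
  assumes K: "convex K" "K \<subseteq> Y" "y \<in> K" "u \<in> K"
    and Ry: "R differentiable (at y within Y)" and Rz: "R differentiable (at z within Y)"
    and \<eta>: "\<eta> > 0"
    and min: "\<forall>v\<in>K. g \<bullet> (y - z) + bregman R Y y z / \<eta> \<le> g \<bullet> (v - z) + bregman R Y v z / \<eta>"
  shows "\<eta> * (g \<bullet> (y - u)) \<le> bregman R Y u z - bregman R Y u y - bregman R Y y z"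
proof -
  define Dy where "Dy = frechet_derivative R (at y within Y)"
  define Dz where "Dz = frechet_derivative R (at z within Y)"
  have "(R has_derivative Dy) (at y within K)"
    using has_derivative_subset[OF Ry[unfolded frechet_derivative_works] K(2)] by (simp add: Dy_def)
  moreover have Dz: "bounded_linear Dz"
    using Rz frechet_derivative_works has_derivative_bounded_linear unfolding Dz_def by blast
  ultimately have "((\<lambda>v. g \<bullet> (v - z) + (R v - R z - Dz (v - z)) / \<eta>)
                     has_derivative (\<lambda>h. g \<bullet> h + (Dy h - Dz h) / \<eta>)) (at y within K)"
    using \<eta> by (auto intro!: derivative_eq_intros bounded_linear.has_derivative[OF Dz])
  then have "((\<lambda>v. g \<bullet> (v - z) + bregman R Y v z / \<eta>)
                     has_derivative (\<lambda>h. g \<bullet> h + (Dy h - Dz h) / \<eta>)) (at y within K)"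
    by (simp add: bregman_def Dz_def)
  from has_derivative_min_on_convex_nonneg[OF this K(1,3,4)] min
  have "0 \<le> g \<bullet> (u - y) + (Dy (u - y) - Dz (u - y)) / \<eta>"
    by blast
  then have "0 \<le> \<eta> * (g \<bullet> (u - y)) + (Dy (u - y) - Dz (u - y))"
    using \<eta> by (simp add: field_simps)
  moreover have "\<eta> * (g \<bullet> (y - u)) = - (\<eta> * (g \<bullet> (u - y)))"
    by (simp add: inner_diff_right algebra_simps)
  moreover note bregman_three_point[OF Rz, of u y, folded Dy_def Dz_def]
  ultimately show ?thesis
    by linarith
qed

lemma mirror_descent_step_bound:
  fixes R :: "'a::real_inner \<Rightarrow> real"
  assumes sc: "strongly_convex_on 1 Y R" and Y: "convex Y"
    and R: "\<forall>x\<in>Y. R differentiable (at x within Y)"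
    and lip: "\<forall>w\<in>Y. G-lipschitz_on Y (\<lambda>v. bregman R Y w v)"
    and K: "convex K" "K \<subseteq> Y" and \<eta>: "\<eta> > 0"
    and z: "z \<in> Y" "z' \<in> Y" and u: "u \<in> K" and y: "y \<in> K"
    and min: "\<forall>v\<in>K. g \<bullet> (y - z) + bregman R Y y z / \<eta> \<le> g \<bullet> (v - z) + bregman R Y v z / \<eta>"
    and z': "z' = r + y"
  shows "g \<bullet> (z - u)
           \<le> \<eta> / 2 * (norm g)\<^sup>2 + (bregman R Y u z - bregman R Y u z') / \<eta> + G / \<eta> * norm r"
proof -
  have yY: "y \<in> Y" and uY: "u \<in> Y"
    using K(2) y u by auto
  have opt: "\<eta> * (g \<bullet> (y - u)) \<le> bregman R Y u z - bregman R Y u y - bregman R Y y z"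
    using bregman_prox_step_optimality[OF K y u _ _ \<eta> min] R yY z by blast
  have "1 / 2 * (norm (y - z))\<^sup>2 \<le> bregman R Y y z"
    using bregman_ge_strongly_convex[OF sc Y yY z(1)] R z by blast
  moreover have "\<eta> * (g \<bullet> (z - y)) \<le> \<eta>\<^sup>2 / 2 * (norm g)\<^sup>2 + 1 / 2 * (norm (y - z))\<^sup>2"
  proof -
    have "\<eta> * (g \<bullet> (z - y)) \<le> (\<eta> * norm g) * norm (y - z)"
      using \<eta> Cauchy_Schwarz_ineq2[of g "z - y"] by (simp add: norm_minus_commute)
    moreover have "0 \<le> (\<eta> * norm g - norm (y - z))\<^sup>2"
      by simp
    ultimately show ?thesis
      by (simp add: power2_eq_square algebra_simps)
  qed
  moreover have "bregman R Y u z' - G * norm r \<le> bregman R Y u y"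
  proof -
    have "dist (bregman R Y u z') (bregman R Y u y) \<le> G * dist z' y"
      using lip uY z(2) yY unfolding lipschitz_on_def by blast
    then show ?thesis
      using z' by (simp add: dist_norm dist_real_def)
  qed
  moreover have "\<eta> * (g \<bullet> (z - u)) = \<eta> * (g \<bullet> (z - y)) + \<eta> * (g \<bullet> (y - u))"
    by (simp add: inner_diff_right algebra_simps)
  ultimately have "\<eta> * (g \<bullet> (z - u))
                     \<le> \<eta>\<^sup>2 / 2 * (norm g)\<^sup>2 + (bregman R Y u z - bregman R Y u z') + G * norm r"
    using opt by linarith
  also have "\<dots> = \<eta> * (\<eta> / 2 * (norm g)\<^sup>2 + (bregman R Y u z - bregman R Y u z') / \<eta> + G / \<eta> * norm r)"
    using \<eta> by (simp add: field_simps power2_eq_square)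
  finally show ?thesis
    using \<eta> by simp
qed

lemma sum_le_telescoping:
  fixes a b \<phi> :: "nat \<Rightarrow> real"
  assumes step: "\<And>t. 1 \<le> t \<Longrightarrow> t \<le> T \<Longrightarrow> a t \<le> b t + (\<phi> t - \<phi> (Suc t))"
    and "0 \<le> \<phi> (Suc T)"
  shows "(\<Sum>t=1..T. a t) \<le> \<phi> 1 + (\<Sum>t=1..T. b t)"
proof -
  have "(\<Sum>t=1..T. a t) \<le> (\<Sum>t=1..T. b t + (\<phi> t - \<phi> (Suc t)))"
    using step by (intro sum_mono) auto
  also have "\<dots> = (\<Sum>t=1..T. b t) - (\<Sum>t=1..T. \<phi> (Suc t) - \<phi> t)"
    by (simp add: sum.distrib sum_subtractf)
  also have "\<dots> = (\<Sum>t=1..T. b t) + \<phi> 1 - \<phi> (Suc T)"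
    using sum_Suc_diff[of 1 T \<phi>] by simp
  finally show ?thesis
    using assms(2) by linarith
qed

lemma mirror_descent_regret:
  fixes R :: "'a::real_inner \<Rightarrow> real" and g z y r :: "nat \<Rightarrow> 'a"
  assumes sc: "strongly_convex_on 1 Y R" and Y: "convex Y"
    and R: "\<forall>x\<in>Y. R differentiable (at x within Y)"
    and lip: "\<forall>w\<in>Y. G-lipschitz_on Y (\<lambda>v. bregman R Y w v)"
    and K: "convex K" "K \<subseteq> Y" and \<eta>: "\<eta> > 0"
    and zY: "\<forall>t\<ge>1. z t \<in> Y"
    and step: "\<forall>t\<ge>1. z (t + 1) = r (t + 1) + y (t + 1)"
    and argmin: "\<forall>t\<ge>1. y (t + 1) \<in> K \<and>
        (\<forall>v\<in>K. g t \<bullet> (y (t + 1) - z t) + bregman R Y (y (t + 1)) (z t) / \<eta>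
               \<le> g t \<bullet> (v - z t) + bregman R Y v (z t) / \<eta>)"
    and u: "u \<in> K"
  shows "(\<Sum>t=1..T. g t \<bullet> (z t - u))
           \<le> bregman R Y u (z 1) / \<eta> + \<eta> / 2 * (\<Sum>t=1..T. (norm (g t))\<^sup>2)
              + G / \<eta> * (\<Sum>t=1..T. norm (r (t + 1)))"
proof -
  have "(\<Sum>t=1..T. g t \<bullet> (z t - u))
          \<le> bregman R Y u (z 1) / \<eta> + (\<Sum>t=1..T. \<eta> / 2 * (norm (g t))\<^sup>2 + G / \<eta> * norm (r (t + 1)))"
  proof (rule sum_le_telescoping)
    fix t :: nat assume t: "1 \<le> t"
    have zt: "z t \<in> Y" "z (t + 1) \<in> Y"
      using zY t by auto
    note argmin_t = argmin[rule_format, OF t]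
    have "g t \<bullet> (z t - u) \<le> \<eta> / 2 * (norm (g t))\<^sup>2
            + (bregman R Y u (z t) - bregman R Y u (z (t + 1))) / \<eta> + G / \<eta> * norm (r (t + 1))"
      by (rule mirror_descent_step_bound[OF sc Y R lip K \<eta> zt u
            conjunct1[OF argmin_t] conjunct2[OF argmin_t] step[rule_format, OF t]])
    then show "g t \<bullet> (z t - u) \<le> \<eta> / 2 * (norm (g t))\<^sup>2 + G / \<eta> * norm (r (t + 1))
                 + (bregman R Y u (z t) / \<eta> - bregman R Y u (z (Suc t)) / \<eta>)"
      by (simp add: diff_divide_distrib)
  next
    have "1 / 2 * (norm (u - z (Suc T)))\<^sup>2 \<le> bregman R Y u (z (Suc T))"
      using bregman_ge_strongly_convex[OF sc Y] R zY u K(2) by auto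
    moreover have "0 \<le> 1 / 2 * (norm (u - z (Suc T)))\<^sup>2"
      by simp
    ultimately have "0 \<le> bregman R Y u (z (Suc T))"
      by linarith
    then show "0 \<le> bregman R Y u (z (Suc T)) / \<eta>"
      using \<eta> by simp
  qed
  then show ?thesis
    by (simp add: sum.distrib sum_distrib_left)
qed

lemma regret_bound_le_uniform_bound:
  fixes g r :: "nat \<Rightarrow> 'a::real_normed_vector"
  assumes \<eta>: "\<eta> > 0" and G: "G \<ge> 0" and D1: "B \<le> D1"
    and GF: "\<forall>t\<ge>1. norm (g t) \<le> GF" and C: "\<forall>t\<ge>1. norm (r (t + 1)) \<le> C"
  shows "B / \<eta> + \<eta> / 2 * (\<Sum>t=1..T. (norm (g t))\<^sup>2) + G / \<eta> * (\<Sum>t=1..T. norm (r (t + 1)))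
           \<le> D1 / \<eta> + \<eta> * GF\<^sup>2 * real T / 2 + C * G * real T / \<eta>"
proof -
  have "B / \<eta> \<le> D1 / \<eta>"
    using D1 \<eta> by (simp add: divide_right_mono)
  moreover have "(\<Sum>t=1..T. (norm (g t))\<^sup>2) \<le> real T * GF\<^sup>2"
    using GF sum_bounded_above[of "{1..T}" "\<lambda>t. (norm (g t))\<^sup>2" "GF\<^sup>2"]
    by (simp add: power_mono)
  then have "\<eta> / 2 * (\<Sum>t=1..T. (norm (g t))\<^sup>2) \<le> \<eta> * GF\<^sup>2 * real T / 2"
    using mult_left_mono[of _ _ "\<eta> / 2"] \<eta> by (simp add: algebra_simps)
  moreover have "(\<Sum>t=1..T. norm (r (t + 1))) \<le> real T * C"
    using C sum_bounded_above[of "{1..T}" "\<lambda>t. norm (r (t + 1))" C] by simp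
  then have "G / \<eta> * (\<Sum>t=1..T. norm (r (t + 1))) \<le> C * G * real T / \<eta>"
    using mult_left_mono[of _ _ "G / \<eta>"] \<eta> G by (fastforce simp: algebra_simps)
  ultimately show ?thesis
    by linarith
qed

theorem lemmaC5:
  fixes Y K :: "'a::euclidean_space set"
    and R :: "'a \<Rightarrow> real"
    and G \<eta> :: real
    and g z y r :: "nat \<Rightarrow> 'a"
  assumes Y: "convex Y" "compact Y"
    and R_diff: "\<forall>x\<in>Y. R differentiable (at x within Y)"
    and R_sc: "strongly_convex_on 1 Y R"
    and D_lip: "\<forall>w\<in>Y. G-lipschitz_on Y (\<lambda>v. bregman R Y w v)"
    and K: "K \<subseteq> Y" "closed K" "convex K"
    and eta: "\<eta> > 0"
    and z1: "z 1 \<in> K"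
    and zY: "\<forall>t\<ge>1. z t \<in> Y"
    and step: "\<forall>t\<ge>1. z (t + 1) = r (t + 1) + y (t + 1)"
    and argmin: "\<forall>t\<ge>1. y (t + 1) \<in> K \<and>
        (\<forall>v\<in>K. g t \<bullet> (y (t + 1) - z t) + bregman R Y (y (t + 1)) (z t) / \<eta>
               \<le> g t \<bullet> (v - z t) + bregman R Y v (z t) / \<eta>)"
  shows "(\<forall>u\<in>K. \<forall>T::nat.
           (\<Sum>t=1..T. g t \<bullet> (z t - u))
             \<le> bregman R Y u (z 1) / \<eta> + \<eta> / 2 * (\<Sum>t=1..T. (norm (g t))\<^sup>2)
                + G / \<eta> * (\<Sum>t=1..T. norm (r (t + 1))))
    \<and> (\<forall>u\<in>K. \<forall>T::nat. \<forall>GF C D1::real.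
           (\<forall>t\<ge>1. norm (g t) \<le> GF) \<and> (\<forall>t\<ge>1. norm (r (t + 1)) \<le> C)
           \<and> (\<forall>w\<in>Y. \<forall>w'\<in>Y. bregman R Y w w' \<le> D1) \<longrightarrow>
           (\<Sum>t=1..T. g t \<bullet> (z t - u))
             \<le> D1 / \<eta> + \<eta> * GF\<^sup>2 * real T / 2 + C * G * real T / \<eta>)"
proof -
  \<comment> \<open>Compactness of Y and closedness of K only serve to make the assumed minimiser exist.\<close>
  have regret: "(\<Sum>t=1..T. g t \<bullet> (z t - u))
      \<le> bregman R Y u (z 1) / \<eta> + \<eta> / 2 * (\<Sum>t=1..T. (norm (g t))\<^sup>2)
         + G / \<eta> * (\<Sum>t=1..T. norm (r (t + 1)))" if "u \<in> K" for u T
    using mirror_descent_regret[OF R_sc Y(1) R_diff D_lip K(3,1) eta zY step argmin that] .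
  have G: "0 \<le> G"
    using D_lip z1 K(1) lipschitz_on_nonneg by blast
  have uniform: "(\<Sum>t=1..T. g t \<bullet> (z t - u)) \<le> D1 / \<eta> + \<eta> * GF\<^sup>2 * real T / 2 + C * G * real T / \<eta>"
    if u: "u \<in> K" and GF: "\<forall>t\<ge>1. norm (g t) \<le> GF" and C: "\<forall>t\<ge>1. norm (r (t + 1)) \<le> C"
      and D1: "\<forall>w\<in>Y. \<forall>w'\<in>Y. bregman R Y w w' \<le> D1" for u T GF C D1
  proof -
    have "bregman R Y u (z 1) \<le> D1"
      using D1 u z1 K(1) by blast
    then show ?thesis
      using order_trans[OF regret[OF u] regret_bound_le_uniform_bound[OF eta G _ GF C]] by blast
  qed
  show ?thesis
    by (intro conjI ballI allI impI; (elim conjE)?; rule regret uniform; assumption)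
qed

end
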